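(* Let $K$ be a field of characteristic different from $2$, let $c\in K$, let $f=x^2+c\in K[x]$, and let $\alpha\in K$. Assume that the backward orbit $f^{-\infty}(\alpha)=\bigcup_{n\ge 1}(f^n)^{-1}(\alpha)\subseteq\overline{K}$ does not contain $0$ (the unique critical point of $f$ in $\overline{K}$). Define $c_1=-c$ and $c_n=f(c_{n-1})$ for $n\ge 2$, and set $c_{1,\alpha}=c_1+\alpha$ and $c_{n,\alpha}=c_n-\alpha$ for $n\ge 2$. If the Galois group $G_\infty(f,\alpha)$ is abelian and $f-\alpha$ is irreducible over $K$, then the $\mathbb{F}_2$-subspace of $K^{\times}/(K^{\times})^2$ spanned by the classes of the elements $c_{n,\alpha}$, $n\ge 1$, has dimension $1$.
   Context: For $n\ge1$, $f^n$ denotes the $n$-th iterate of $f$, $K_n(f,\alpha)$ the splitting field of $f^n-\alpha$ over $K$, and $K_\infty(f,\alpha)=\bigcup_n K_n(f,\alpha)$. The dynamical Galois group $G_\infty(f,\alpha)$ is the Galois group of $K_\infty(f,\alpha)/K$ (equivalently the inverse limit of the Galois groups of $K_n(f,\alpha)/K$). The hypothesis on the backward orbit ensures $c_{n,\alpha}\neq 0$, so these define classes in $K^\times/(K^\times)^2$, which is viewed as an $\mathbb{F}_2$-vector space. *)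

theory Defs
  imports "HOL-Algebra.Algebraic_Closure_Type"
begin

definition is_subfield :: "'a::field set \<Rightarrow> bool" where
  "is_subfield F \<longleftrightarrow> 0 \<in> F \<and> 1 \<in> F \<and>
     (\<forall>x\<in>F. \<forall>y\<in>F. x + y \<in> F \<and> x * y \<in> F) \<and>
     (\<forall>x\<in>F. - x \<in> F \<and> inverse x \<in> F)"

definition gen_subfield :: "'a::field set \<Rightarrow> 'a set" where
  "gen_subfield S = \<Inter> {F. is_subfield F \<and> S \<subseteq> F}"

definition fbar :: "'k::field \<Rightarrow> 'k alg_closure \<Rightarrow> 'k alg_closure" where
  "fbar c z = z ^ 2 + to_ac c"

definition backward_orbit :: "'k::field \<Rightarrow> 'k \<Rightarrow> 'k alg_closure set" where
  "backward_orbit c \<alpha> = {z. \<exists>n\<ge>1. (fbar c ^^ n) z = to_ac \<alpha>}"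

definition Kn :: "'k::field \<Rightarrow> 'k \<Rightarrow> nat \<Rightarrow> 'k alg_closure set" where
  "Kn c \<alpha> n = gen_subfield (range to_ac \<union> {z. (fbar c ^^ n) z = to_ac \<alpha>})"

definition Kinf :: "'k::field \<Rightarrow> 'k \<Rightarrow> 'k alg_closure set" where
  "Kinf c \<alpha> = (\<Union>n\<in>{1..}. Kn c \<alpha> n)"

definition Ginf :: "'k::field \<Rightarrow> 'k \<Rightarrow> ('k alg_closure \<Rightarrow> 'k alg_closure) set" where
  "Ginf c \<alpha> = {\<sigma>. bij_betw \<sigma> (Kinf c \<alpha>) (Kinf c \<alpha>) \<and>
      (\<forall>x\<in>Kinf c \<alpha>. \<forall>y\<in>Kinf c \<alpha>. \<sigma> (x + y) = \<sigma> x + \<sigma> y \<and> \<sigma> (x * y) = \<sigma> x * \<sigma> y) \<and>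
      (\<forall>a. \<sigma> (to_ac a) = to_ac a)}"

definition Ginf_abelian :: "'k::field \<Rightarrow> 'k \<Rightarrow> bool" where
  "Ginf_abelian c \<alpha> \<longleftrightarrow>
     (\<forall>\<sigma>\<in>Ginf c \<alpha>. \<forall>\<tau>\<in>Ginf c \<alpha>. \<forall>x\<in>Kinf c \<alpha>. \<sigma> (\<tau> x) = \<tau> (\<sigma> x))"

definition cseq :: "'k::field \<Rightarrow> nat \<Rightarrow> 'k" where
  "cseq c n = ((\<lambda>x. x ^ 2 + c) ^^ (n - 1)) (- c)"

definition cseq_alpha :: "'k::field \<Rightarrow> 'k \<Rightarrow> nat \<Rightarrow> 'k" where
  "cseq_alpha c \<alpha> n = (if n = 1 then cseq c 1 + \<alpha> else cseq c n - \<alpha>)"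

definition sq_class :: "'k::field \<Rightarrow> 'k set" where
  "sq_class x = {x * y ^ 2 | y. y \<noteq> 0}"

text \<open>F_2-span of the classes of c_{n,alpha} (n >= 1) in K^x/(K^x)^2:
  the classes of all finite products of them.\<close>
definition c_span :: "'k::field \<Rightarrow> 'k \<Rightarrow> 'k set set" where
  "c_span c \<alpha> = {sq_class (\<Prod>n\<in>S. cseq_alpha c \<alpha> n) | S. finite S \<and> S \<subseteq> {1..}}"

end

theory Submission
  imports Defs
begin

text \<open>
  Put d = \<alpha> - c. Since f - \<alpha> is irreducible, d is not a square in K, and c_{1,\<alpha>} = d.
  Let s be a square root of d; it lies in K_\<infinity>. For n \<ge> 2 one has c_{n,\<alpha>} = u^2 - d with
  u = f^(n-1)(0), so c_{n,\<alpha>} is the norm of u - s from K(s) to K; moreover u - s (or s - c when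
  n = 2) is a square w^2 in K_\<infinity>, because K_\<infinity> contains square roots of f^m(0) - \<beta> for
  every m \<ge> 2 and every iterated preimage \<beta> of \<alpha>.

  Take t \<in> G_\<infinity> with t s = -s. Then v = w \<cdot> t(w) satisfies v^2 = c_{n,\<alpha>}. If c_{n,\<alpha>} were
  neither a square nor d times a square in K, then v \<notin> K(s), so some g \<in> G_\<infinity> fixing K(s)
  would send v to -v. But g(w) = \<plusminus>w, and g commutes with t, hence g(v) = v, a contradiction.
  So all the classes lie in {1, d}, and d is not a square.

  The automorphisms exist because K_\<infinity> arises from K by repeatedly adjoining square roots:
  along such a tower every embedding into the algebraic closure extends (Zorn's lemma), and an
  embedding of K_\<infinity> fixing K permutes the finite sets of iterated preimages of \<alpha>, hence is
  an automorphism.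
\<close>

lemma alg_closed_sqrt_exists: "\<exists>y::'a::alg_closed_field. y ^ 2 = a"
proof -
  have "degree [:-a, 0, 1:] > 0" by simp
  then obtain y where "poly [:-a, 0, 1:] y = 0"
    using alg_closed_imp_poly_has_root by blast
  then have "y ^ 2 = a" by (simp add: power2_eq_square algebra_simps)
  then show ?thesis by blast
qed

lemma is_subfieldD:
  assumes "is_subfield F"
  shows "0 \<in> F" "1 \<in> F" "x \<in> F \<Longrightarrow> y \<in> F \<Longrightarrow> x + y \<in> F"
    "x \<in> F \<Longrightarrow> y \<in> F \<Longrightarrow> x * y \<in> F" "x \<in> F \<Longrightarrow> - x \<in> F"
    "x \<in> F \<Longrightarrow> inverse x \<in> F"
  using assms unfolding is_subfield_def by auto

lemma subfield_diff: "is_subfield F \<Longrightarrow> x \<in> F \<Longrightarrow> y \<in> F \<Longrightarrow> x - y \<in> F"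
  using is_subfieldD(3)[of F x "-y"] is_subfieldD(5)[of F y] by simp

lemma subfield_divide: "is_subfield F \<Longrightarrow> x \<in> F \<Longrightarrow> y \<in> F \<Longrightarrow> x / y \<in> F"
  using is_subfieldD(4)[of F x "inverse y"] is_subfieldD(6)[of F y] by (simp add: divide_inverse)

lemma subfield_power: "is_subfield F \<Longrightarrow> x \<in> F \<Longrightarrow> x ^ n \<in> F"
  by (induction n) (auto intro: is_subfieldD)

lemma subfield_gen_subfield: "is_subfield (gen_subfield S)"
  unfolding gen_subfield_def is_subfield_def by auto

lemma gen_subfield_superset: "S \<subseteq> gen_subfield S"
  unfolding gen_subfield_def by auto

lemma gen_subfield_least: "is_subfield F \<Longrightarrow> S \<subseteq> F \<Longrightarrow> gen_subfield S \<subseteq> F"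
  unfolding gen_subfield_def by auto

lemma subfield_Union_chain:
  assumes "\<F> \<noteq> {}" "chain\<^sub>\<subseteq> \<F>" "\<And>F. F \<in> \<F> \<Longrightarrow> is_subfield F"
  shows "is_subfield (\<Union>\<F>)"
proof -
  have common: "\<exists>F\<in>\<F>. x \<in> F \<and> y \<in> F" if "x \<in> \<Union>\<F>" "y \<in> \<Union>\<F>" for x y
    using that assms(2) unfolding chain_subset_def by blast
  obtain F0 where "F0 \<in> \<F>" using assms(1) by blast
  then have "0 \<in> \<Union>\<F>" "1 \<in> \<Union>\<F>" using is_subfieldD(1,2)[OF assms(3)] by blast+
  moreover have "x + y \<in> \<Union>\<F> \<and> x * y \<in> \<Union>\<F>" if "x \<in> \<Union>\<F>" "y \<in> \<Union>\<F>" for x y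
    using common[OF that] is_subfieldD(3,4)[OF assms(3)] by blast
  moreover have "- x \<in> \<Union>\<F> \<and> inverse x \<in> \<Union>\<F>" if "x \<in> \<Union>\<F>" for x
    using that is_subfieldD(5,6)[OF assms(3)] by blast
  ultimately show ?thesis unfolding is_subfield_def by blast
qed

locale field_hom_on =
  fixes E :: "'a::field set" and \<phi> :: "'a \<Rightarrow> 'a"
  assumes subfield: "is_subfield E"
    and map_one: "\<phi> 1 = 1"
    and map_add: "x \<in> E \<Longrightarrow> y \<in> E \<Longrightarrow> \<phi> (x + y) = \<phi> x + \<phi> y"
    and map_mult: "x \<in> E \<Longrightarrow> y \<in> E \<Longrightarrow> \<phi> (x * y) = \<phi> x * \<phi> y"
begin

lemma map_zero: "\<phi> 0 = 0"
proof -
  have "\<phi> 0 + \<phi> 0 = \<phi> 0 + 0"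
    using map_add[of 0 0] is_subfieldD(1)[OF subfield] by simp
  then show ?thesis by (simp only: add_left_cancel)
qed

lemma map_uminus: "x \<in> E \<Longrightarrow> \<phi> (- x) = - \<phi> x"
  using map_add[of x "- x"] is_subfieldD(5)[OF subfield] map_zero
  by (simp add: minus_unique)

lemma map_diff: "x \<in> E \<Longrightarrow> y \<in> E \<Longrightarrow> \<phi> (x - y) = \<phi> x - \<phi> y"
  using map_add[of x "- y"] map_uminus[of y] is_subfieldD(5)[OF subfield] by simp

lemma map_power2: "x \<in> E \<Longrightarrow> \<phi> (x ^ 2) = \<phi> x ^ 2"
  using map_mult[of x x] by (simp add: power2_eq_square)

lemma map_inverse: "x \<in> E \<Longrightarrow> \<phi> (inverse x) = inverse (\<phi> x)"
proof (cases "x = 0")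
  case False
  assume "x \<in> E"
  then have "\<phi> x * \<phi> (inverse x) = 1"
    using map_mult[of x "inverse x"] is_subfieldD(6)[OF subfield] map_one False by simp
  then show ?thesis by (metis inverse_unique)
qed (simp add: map_zero)

lemma map_eq_0_iff: "x \<in> E \<Longrightarrow> \<phi> x = 0 \<longleftrightarrow> x = 0"
  using map_mult[of x "inverse x"] is_subfieldD(6)[OF subfield] map_one map_zero
  by (cases "x = 0") auto

lemma inj_on: "inj_on \<phi> E"
proof (rule inj_onI)
  fix x y assume "x \<in> E" "y \<in> E" "\<phi> x = \<phi> y"
  then have "\<phi> (x - y) = 0" using map_diff by simp
  then show "x = y"
    using map_eq_0_iff subfield_diff[OF subfield] \<open>x \<in> E\<close> \<open>y \<in> E\<close> by auto
qed

lemma field_hom_on_cong: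
  assumes "\<And>x. x \<in> E \<Longrightarrow> \<psi> x = \<phi> x"
  shows "field_hom_on E \<psi>"
proof
  show "is_subfield E" by (rule subfield)
  show "\<psi> 1 = 1" using assms map_one is_subfieldD(2)[OF subfield] by simp
  fix x y assume "x \<in> E" "y \<in> E"
  then show "\<psi> (x + y) = \<psi> x + \<psi> y" "\<psi> (x * y) = \<psi> x * \<psi> y"
    using assms map_add map_mult is_subfieldD(3,4)[OF subfield] by simp_all
qed

lemma image_subfield:
  assumes "is_subfield F" "F \<subseteq> E"
  shows "is_subfield (\<phi> ` F)"
proof -
  have "\<phi> x + \<phi> y \<in> \<phi> ` F \<and> \<phi> x * \<phi> y \<in> \<phi> ` F" if "x \<in> F" "y \<in> F" for x y
  proof -
    have "x \<in> E" "y \<in> E" using that assms(2) by auto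
    then have "\<phi> x + \<phi> y = \<phi> (x + y)" "\<phi> x * \<phi> y = \<phi> (x * y)"
      using map_add map_mult by auto
    then show ?thesis using is_subfieldD(3,4)[OF assms(1) that] by simp
  qed
  moreover have "- \<phi> x \<in> \<phi> ` F \<and> inverse (\<phi> x) \<in> \<phi> ` F" if "x \<in> F" for x
  proof -
    have "x \<in> E" using that assms(2) by auto
    then have "- \<phi> x = \<phi> (- x)" "inverse (\<phi> x) = \<phi> (inverse x)"
      using map_uminus map_inverse by auto
    then show ?thesis using is_subfieldD(5,6)[OF assms(1) that] by simp
  qed
  moreover have "0 \<in> \<phi> ` F" "1 \<in> \<phi> ` F"
    using map_zero map_one is_subfieldD(1,2)[OF assms(1)] image_eqI by metis+
  ultimately show ?thesis unfolding is_subfield_def by blast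
qed

lemma preimage_subfield:
  assumes "is_subfield F"
  shows "is_subfield {x \<in> E. \<phi> x \<in> F}"
  using subfield assms
  unfolding is_subfield_def by (simp add: map_zero map_one map_add map_mult map_uminus map_inverse)

lemma image_gen_subfield:
  assumes "gen_subfield S \<subseteq> E"
  shows "\<phi> ` gen_subfield S = gen_subfield (\<phi> ` S)"
proof
  have "S \<subseteq> E" using assms gen_subfield_superset by blast
  then have "gen_subfield S \<subseteq> {x \<in> E. \<phi> x \<in> gen_subfield (\<phi> ` S)}"
    using gen_subfield_superset
    by (intro gen_subfield_least preimage_subfield subfield_gen_subfield) blast
  then show "\<phi> ` gen_subfield S \<subseteq> gen_subfield (\<phi> ` S)" by blast
  show "gen_subfield (\<phi> ` S) \<subseteq> \<phi> ` gen_subfield S"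
    using gen_subfield_superset
    by (intro gen_subfield_least image_subfield[OF subfield_gen_subfield assms]) blast
qed

end

lemma field_hom_on_id: "is_subfield E \<Longrightarrow> field_hom_on E id"
  by unfold_locales simp_all

section \<open>Adjoining a square root\<close>

lemma mult_adjoin_expand:
  fixes a b a' b' x :: "'a::comm_ring_1"
  shows "(a + b * x) * (a' + b' * x) = (a * a' + b * b' * x ^ 2) + (a * b' + a' * b) * x"
  by (simp add: algebra_simps power2_eq_square)

definition adjoin :: "'a::field set \<Rightarrow> 'a \<Rightarrow> 'a set" where
  "adjoin E x = {a + b * x | a b. a \<in> E \<and> b \<in> E}"

lemma adjoin_repr_unique:
  assumes "is_subfield E" "x \<notin> E" "a \<in> E" "b \<in> E" "a' \<in> E" "b' \<in> E"
    and "a + b * x = a' + b' * x"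
  shows "a = a' \<and> b = b'"
proof (cases "b = b'")
  case False
  then have "x = (a - a') / (b' - b)"
    using assms(7) by (simp add: field_simps)
  moreover have "(a - a') / (b' - b) \<in> E"
    using assms(1,3-6) by (intro subfield_divide subfield_diff)
  ultimately show ?thesis using assms(2) by simp
qed (use assms(7) in simp)

lemma adjoinI: "a \<in> E \<Longrightarrow> b \<in> E \<Longrightarrow> a + b * x \<in> adjoin E x"
  unfolding adjoin_def by blast

lemma subset_adjoin: "is_subfield E \<Longrightarrow> E \<subseteq> adjoin E x"
  unfolding adjoin_def using is_subfieldD(1) by force

lemma mem_adjoin_self: "is_subfield E \<Longrightarrow> x \<in> adjoin E x"
  unfolding adjoin_def using is_subfieldD(1,2) by force

lemma adjoin_subset: "is_subfield L \<Longrightarrow> E \<subseteq> L \<Longrightarrow> x \<in> L \<Longrightarrow> adjoin E x \<subseteq> L"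
  unfolding adjoin_def using is_subfieldD(3,4) by blast

lemma square_in_adjoin_iff:
  fixes x :: "'a::field"
  assumes "is_subfield E" "(2::'a) \<noteq> 0" "x \<notin> E" "x ^ 2 \<in> E" "a \<in> E" "b \<in> E"
  shows "(a + b * x) ^ 2 \<in> E \<longleftrightarrow> a = 0 \<or> b = 0"
proof
  assume sq: "(a + b * x) ^ 2 \<in> E"
  have "(2 * a * b) * x = (a + b * x) ^ 2 - (a ^ 2 + b ^ 2 * x ^ 2)"
    by (simp add: algebra_simps power2_eq_square)
  also have "\<dots> \<in> E"
  proof (rule subfield_diff[OF assms(1) sq])
    show "a ^ 2 + b ^ 2 * x ^ 2 \<in> E"
      using is_subfieldD(3,4)[OF assms(1)] subfield_power[OF assms(1)] assms(4-6) by blast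
  qed
  finally have prod_mem: "(2 * a * b) * x \<in> E" .
  have "2 \<in> E" using is_subfieldD(2,3)[OF assms(1)] one_add_one by metis
  then have two_ab_mem: "2 * a * b \<in> E"
    using assms(5,6) is_subfieldD(4)[OF assms(1)] by blast
  have "2 * a * b = 0"
  proof (rule ccontr)
    assume "2 * a * b \<noteq> 0"
    then have "x = ((2 * a * b) * x) / (2 * a * b)" by simp
    then have "x \<in> E" using subfield_divide[OF assms(1) prod_mem two_ab_mem] by simp
    then show False using assms(3) by simp
  qed
  then show "a = 0 \<or> b = 0" using assms(2) by simp
next
  assume "a = 0 \<or> b = 0"
  then show "(a + b * x) ^ 2 \<in> E"
  proof
    assume "a = 0"
    then show ?thesis
      using assms(4,6) subfield_power[OF assms(1)] is_subfieldD(4)[OF assms(1)]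
      by (simp add: power_mult_distrib)
  next
    assume "b = 0"
    then show ?thesis using assms(5) subfield_power[OF assms(1)] by simp
  qed
qed

lemma adjoin_norm_nonzero:
  assumes E: "is_subfield E" and x: "x \<notin> E" and ab: "a \<in> E" "b \<in> E"
    and "a + b * x \<noteq> 0"
  shows "a ^ 2 - b ^ 2 * x ^ 2 \<noteq> 0"
proof
  assume "a ^ 2 - b ^ 2 * x ^ 2 = 0"
  then have "a ^ 2 = (b * x) ^ 2" by (simp add: power_mult_distrib)
  then have "a + 0 * x = 0 + b * x \<or> a + 0 * x = 0 + (- b) * x"
    by (simp add: power2_eq_iff)
  then have "a = 0 \<and> b = 0"
    using adjoin_repr_unique[OF E x ab(1) is_subfieldD(1)[OF E] is_subfieldD(1)[OF E] ab(2)]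
      adjoin_repr_unique[OF E x ab(1) is_subfieldD(1)[OF E] is_subfieldD(1)[OF E]
        is_subfieldD(5)[OF E ab(2)]]
    by (metis neg_equal_0_iff_equal)
  then show False using assms(5) by simp
qed

lemma inverse_mem_adjoin:
  assumes E: "is_subfield E" and x: "x \<notin> E" "x ^ 2 \<in> E" and ab: "a \<in> E" "b \<in> E"
  shows "inverse (a + b * x) \<in> adjoin E x"
proof (cases "a + b * x = 0")
  case True
  then have "inverse (a + b * x) = 0 + 0 * x" by simp
  then show ?thesis using adjoinI is_subfieldD(1)[OF E] by metis
next
  case False
  define N where "N = a ^ 2 - b ^ 2 * x ^ 2"
  have "N \<noteq> 0" unfolding N_def by (rule adjoin_norm_nonzero[OF E x(1) ab False])
  have "(a + b * x) * (a - b * x) = N"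
    unfolding N_def by (simp add: algebra_simps power2_eq_square)
  moreover have "a / N + (- b / N) * x = (a - b * x) / N" by (simp add: diff_divide_distrib)
  ultimately have "(a + b * x) * (a / N + (- b / N) * x) = 1"
    using \<open>N \<noteq> 0\<close> by simp
  then have inv: "inverse (a + b * x) = a / N + (- b / N) * x" by (rule inverse_unique)
  have "N \<in> E"
    unfolding N_def
    using subfield_diff[OF E subfield_power[OF E ab(1)]
        is_subfieldD(4)[OF E subfield_power[OF E ab(2)] x(2)]] .
  then have "a / N \<in> E" "- b / N \<in> E"
    using ab is_subfieldD(5)[OF E] subfield_divide[OF E] by simp_all
  then show ?thesis unfolding inv by (rule adjoinI)
qed

lemma adjoin_subfield:
  assumes E: "is_subfield E" and x: "x \<notin> E" "x ^ 2 \<in> E"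
  shows "is_subfield (adjoin E x)"
  unfolding is_subfield_def
proof (intro conjI ballI)
  note closed = is_subfieldD[OF E]
  show "0 \<in> adjoin E x" "1 \<in> adjoin E x" using subset_adjoin[OF E] closed(1,2) by blast+
next
  fix u v assume "u \<in> adjoin E x" "v \<in> adjoin E x"
  then obtain a b a' b' where u: "u = a + b * x" "a \<in> E" "b \<in> E"
    and v: "v = a' + b' * x" "a' \<in> E" "b' \<in> E"
    unfolding adjoin_def by blast
  have "u + v = (a + a') + (b + b') * x" using u v by (simp add: algebra_simps)
  then show "u + v \<in> adjoin E x" using adjoinI u v is_subfieldD(3)[OF E] by metis
  have "a * a' + b * b' * x ^ 2 \<in> E" "a * b' + a' * b \<in> E"
    using u v x(2) is_subfieldD(3,4)[OF E] by simp_all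
  then show "u * v \<in> adjoin E x"
    unfolding u v mult_adjoin_expand by (rule adjoinI)
next
  fix u assume "u \<in> adjoin E x"
  then obtain a b where u: "u = a + b * x" "a \<in> E" "b \<in> E" unfolding adjoin_def by blast
  have "- u = - a + (- b) * x" using u by simp
  then show "- u \<in> adjoin E x" using adjoinI u is_subfieldD(5)[OF E] by metis
  show "inverse u \<in> adjoin E x" using inverse_mem_adjoin[OF E x u(2,3)] u(1) by simp
qed

section \<open>Extending homomorphisms along square-root towers\<close>

definition graph_app :: "('a \<times> 'b) set \<Rightarrow> 'a \<Rightarrow> 'b" where
  "graph_app R x = (THE y. (x, y) \<in> R)"

lemma graph_app_eq: "single_valued R \<Longrightarrow> (x, y) \<in> R \<Longrightarrow> graph_app R x = y"
  unfolding graph_app_def by (rule the_equality) (auto dest: single_valuedD)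

lemma graph_app_mem: "single_valued R \<Longrightarrow> x \<in> Domain R \<Longrightarrow> (x, graph_app R x) \<in> R"
  using graph_app_eq by fastforce

definition adjoin_graph :: "'a::field set \<Rightarrow> ('a \<Rightarrow> 'a) \<Rightarrow> 'a \<Rightarrow> 'a \<Rightarrow> ('a \<times> 'a) set" where
  "adjoin_graph E \<phi> x y = {(a + b * x, \<phi> a + \<phi> b * y) | a b. a \<in> E \<and> b \<in> E}"

lemma Domain_adjoin_graph: "Domain (adjoin_graph E \<phi> x y) = adjoin E x"
  unfolding adjoin_graph_def adjoin_def by blast

context field_hom_on
begin

lemma single_valued_adjoin_graph:
  assumes "x \<notin> E"
  shows "single_valued (adjoin_graph E \<phi> x y)"
proof (rule single_valuedI)
  fix u v v' assume "(u, v) \<in> adjoin_graph E \<phi> x y" "(u, v') \<in> adjoin_graph E \<phi> x y"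
  then obtain a b a' b' where "a \<in> E" "b \<in> E" "a' \<in> E" "b' \<in> E" "u = a + b * x" "u = a' + b' * x"
    and "v = \<phi> a + \<phi> b * y" "v' = \<phi> a' + \<phi> b' * y"
    unfolding adjoin_graph_def by blast
  then show "v = v'" using adjoin_repr_unique[OF subfield assms, of a b a' b'] by simp
qed

lemma graph_app_adjoin_graph:
  "x \<notin> E \<Longrightarrow> a \<in> E \<Longrightarrow> b \<in> E \<Longrightarrow> graph_app (adjoin_graph E \<phi> x y) (a + b * x) = \<phi> a + \<phi> b * y"
  by (rule graph_app_eq[OF single_valued_adjoin_graph]) (auto simp: adjoin_graph_def)

lemma graph_subset_adjoin_graph: "{(a, \<phi> a) | a. a \<in> E} \<subseteq> adjoin_graph E \<phi> x y"
proof
  fix p assume "p \<in> {(a, \<phi> a) | a. a \<in> E}"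
  then obtain a where "p = (a + 0 * x, \<phi> a + \<phi> 0 * y)" "a \<in> E" using map_zero by auto
  then show "p \<in> adjoin_graph E \<phi> x y"
    unfolding adjoin_graph_def using is_subfieldD(1)[OF subfield] by blast
qed

lemma field_hom_on_adjoin_graph:
  assumes x: "x \<notin> E" "x ^ 2 \<in> E" and y: "y ^ 2 = \<phi> (x ^ 2)"
  shows "field_hom_on (adjoin E x) (graph_app (adjoin_graph E \<phi> x y))"
proof -
  let ?\<psi> = "graph_app (adjoin_graph E \<phi> x y)"
  note closed = is_subfieldD[OF subfield]
  have \<psi>: "?\<psi> (a + b * x) = \<phi> a + \<phi> b * y" if "a \<in> E" "b \<in> E" for a b
    using graph_app_adjoin_graph[OF x(1) that] .
  show ?thesis
  proof
    show "is_subfield (adjoin E x)" by (rule adjoin_subfield[OF subfield x])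
    show "?\<psi> 1 = 1" using \<psi>[of 1 0] closed(1,2) map_one map_zero by simp
  next
    fix u v assume "u \<in> adjoin E x" "v \<in> adjoin E x"
    then obtain a b a' b' where u: "u = a + b * x" "a \<in> E" "b \<in> E"
      and v: "v = a' + b' * x" "a' \<in> E" "b' \<in> E"
      unfolding adjoin_def by blast
    have "u + v = (a + a') + (b + b') * x" using u v by (simp add: algebra_simps)
    then have "?\<psi> (u + v) = \<phi> (a + a') + \<phi> (b + b') * y"
      using \<psi>[OF closed(3)[OF u(2) v(2)] closed(3)[OF u(3) v(3)]] by (simp only:)
    also have "\<dots> = ?\<psi> u + ?\<psi> v"
      using \<psi> u v map_add by (simp add: algebra_simps)
    finally show "?\<psi> (u + v) = ?\<psi> u + ?\<psi> v" .
    have in_E: "a * a' + b * b' * x ^ 2 \<in> E" "a * b' + a' * b \<in> E"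
      using u v x(2) closed(3,4) by simp_all
    have "?\<psi> (u * v) = \<phi> (a * a' + b * b' * x ^ 2) + \<phi> (a * b' + a' * b) * y"
      unfolding u v mult_adjoin_expand using \<psi>[OF in_E] .
    also have "\<dots> = (\<phi> a * \<phi> a' + \<phi> b * \<phi> b' * y ^ 2) + (\<phi> a * \<phi> b' + \<phi> a' * \<phi> b) * y"
      using u v x(2) closed(4) map_add map_mult y by simp
    also have "\<dots> = ?\<psi> u * ?\<psi> v"
      unfolding u(1) v(1) \<psi>[OF u(2,3)] \<psi>[OF v(2,3)] mult_adjoin_expand ..
    finally show "?\<psi> (u * v) = ?\<psi> u * ?\<psi> v" .
  qed
qed

end

(* Partial homomorphisms are handled through their graphs, so that Zorn's lemma applies to
   the subset order. *)
definition partial_hom :: "'a::field set \<Rightarrow> ('a \<times> 'a) set \<Rightarrow> bool" where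
  "partial_hom L R \<longleftrightarrow>
     single_valued R \<and> Domain R \<subseteq> L \<and> field_hom_on (Domain R) (graph_app R)"

lemma partial_hom_adjoin_graph:
  assumes R: "partial_hom L R" and L: "is_subfield L"
    and x: "x \<in> L" "x \<notin> Domain R" "x ^ 2 \<in> Domain R" and y: "y ^ 2 = graph_app R (x ^ 2)"
  shows "partial_hom L (adjoin_graph (Domain R) (graph_app R) x y)"
    and "R \<subseteq> adjoin_graph (Domain R) (graph_app R) x y"
proof -
  interpret field_hom_on "Domain R" "graph_app R" using R unfolding partial_hom_def by blast
  show "partial_hom L (adjoin_graph (Domain R) (graph_app R) x y)"
    unfolding partial_hom_def Domain_adjoin_graph
    using single_valued_adjoin_graph[OF x(2)] field_hom_on_adjoin_graph[OF x(2,3) y]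
      adjoin_subset[OF L _ x(1)] R
    unfolding partial_hom_def by blast
  have "R = {(a, graph_app R a) | a. a \<in> Domain R}"
    using R graph_app_eq graph_app_mem unfolding partial_hom_def by fastforce
  then show "R \<subseteq> adjoin_graph (Domain R) (graph_app R) x y"
    using graph_subset_adjoin_graph by simp
qed

lemma partial_hom_Union_chain:
  assumes C: "C \<noteq> {}" "chain\<^sub>\<subseteq> C" and R: "\<And>R. R \<in> C \<Longrightarrow> partial_hom L R"
  shows "partial_hom L (\<Union>C)"
proof -
  have hom: "single_valued R" "Domain R \<subseteq> L" "field_hom_on (Domain R) (graph_app R)"
    if "R \<in> C" for R
    using R[OF that] unfolding partial_hom_def by blast+
  have common: "\<exists>R\<in>C. p \<in> R \<and> q \<in> R" if "p \<in> \<Union>C" "q \<in> \<Union>C" for p q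
    using that C(2) unfolding chain_subset_def by blast
  have sv: "single_valued (\<Union>C)"
    by (rule single_valuedI) (use common hom(1) in \<open>metis single_valuedD\<close>)
  have app: "graph_app (\<Union>C) x = graph_app R x" if "R \<in> C" "x \<in> Domain R" for R x
    using graph_app_mem[OF hom(1) that(2)] that(1) by (intro graph_app_eq[OF sv]) blast
  have Domain_common: "\<exists>R\<in>C. x \<in> Domain R \<and> y \<in> Domain R"
    if "x \<in> Domain (\<Union>C)" "y \<in> Domain (\<Union>C)" for x y
    using common[of "(x, graph_app (\<Union>C) x)" "(y, graph_app (\<Union>C) y)"]
      graph_app_mem[OF sv] that by blast
  have "is_subfield (\<Union>(Domain ` C))"
  proof (rule subfield_Union_chain)
    show "chain\<^sub>\<subseteq> (Domain ` C)"
      using C(2) Domain_mono unfolding chain_subset_def by blast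
    show "is_subfield D" if "D \<in> Domain ` C" for D
      using that hom(3) field_hom_on.subfield by blast
  qed (use C(1) in blast)
  then have subfield: "is_subfield (Domain (\<Union>C))" by (simp add: Domain_Union)
  obtain R0 where R0: "R0 \<in> C" using C(1) by blast
  have "field_hom_on (Domain (\<Union>C)) (graph_app (\<Union>C))"
  proof
    show "graph_app (\<Union>C) 1 = 1"
      using R0 app field_hom_on.map_one[OF hom(3)] is_subfieldD(2)[OF field_hom_on.subfield[OF hom(3)]]
      by metis
    fix x y assume "x \<in> Domain (\<Union>C)" "y \<in> Domain (\<Union>C)"
    then obtain R where "R \<in> C" "x \<in> Domain R" "y \<in> Domain R" using Domain_common by blast
    moreover note field_hom_on.map_add[OF hom(3)] field_hom_on.map_mult[OF hom(3)]
      is_subfieldD(3,4)[OF field_hom_on.subfield[OF hom(3)]]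
    ultimately show "graph_app (\<Union>C) (x + y) = graph_app (\<Union>C) x + graph_app (\<Union>C) y"
      "graph_app (\<Union>C) (x * y) = graph_app (\<Union>C) x * graph_app (\<Union>C) y"
      using app by simp_all
  qed (rule subfield)
  moreover have "Domain (\<Union>C) \<subseteq> L" using hom(2) by blast
  ultimately show ?thesis using sv unfolding partial_hom_def by blast
qed

definition generated_by_square_roots :: "'a::field set \<Rightarrow> 'a set \<Rightarrow> bool" where
  "generated_by_square_roots F L \<longleftrightarrow>
     (\<forall>E. is_subfield E \<and> F \<subseteq> E \<and> E \<subseteq> L \<and> (\<forall>z\<in>L. z ^ 2 \<in> E \<longrightarrow> z \<in> E) \<longrightarrow> L \<subseteq> E)"

lemma generated_by_square_rootsI:
  assumes "\<And>E. is_subfield E \<Longrightarrow> F \<subseteq> E \<Longrightarrow> E \<subseteq> L \<Longrightarrow> (\<And>z. z \<in> L \<Longrightarrow> z ^ 2 \<in> E \<Longrightarrow> z \<in> E)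
      \<Longrightarrow> L \<subseteq> E"
  shows "generated_by_square_roots F L"
  using assms unfolding generated_by_square_roots_def by blast

lemma generated_by_square_rootsD:
  assumes "generated_by_square_roots F L" "is_subfield E" "F \<subseteq> E" "E \<subseteq> L"
    and "\<And>z. z \<in> L \<Longrightarrow> z ^ 2 \<in> E \<Longrightarrow> z \<in> E"
  shows "L \<subseteq> E"
  using assms unfolding generated_by_square_roots_def by blast

lemma generated_by_square_roots_mono:
  "generated_by_square_roots F L \<Longrightarrow> F \<subseteq> F' \<Longrightarrow> generated_by_square_roots F' L"
  unfolding generated_by_square_roots_def by blast

lemma partial_hom_graph:
  assumes "field_hom_on E \<phi>" "E \<subseteq> L"
  shows "partial_hom L {(x, \<phi> x) | x. x \<in> E}" (is "partial_hom L ?R")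
proof -
  have sv: "single_valued ?R" unfolding single_valued_def by blast
  have "graph_app ?R x = \<phi> x" if "x \<in> E" for x
    using that by (intro graph_app_eq[OF sv]) blast
  moreover have "Domain ?R = E" by blast
  ultimately show ?thesis
    unfolding partial_hom_def using sv assms(2) field_hom_on.field_hom_on_cong[OF assms(1)] by simp
qed

lemma maximal_partial_hom_exists:
  assumes "partial_hom L R0"
  obtains M where "partial_hom L M" "R0 \<subseteq> M"
    and "\<And>R. partial_hom L R \<Longrightarrow> M \<subseteq> R \<Longrightarrow> R = M"
proof -
  define Exts where "Exts = {R. partial_hom L R \<and> R0 \<subseteq> R}"
  have "\<exists>M\<in>Exts. \<forall>R\<in>Exts. M \<subseteq> R \<longrightarrow> R = M"
  proof (rule subset_Zorn_nonempty)
    show "Exts \<noteq> {}" using assms unfolding Exts_def by blast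
    fix C assume "C \<noteq> {}" "subset.chain Exts C"
    then have "chain\<^sub>\<subseteq> C" "C \<subseteq> Exts"
      unfolding chain_subset_def subset.chain_def by blast+
    then show "\<Union>C \<in> Exts"
      using partial_hom_Union_chain[OF \<open>C \<noteq> {}\<close>] \<open>C \<noteq> {}\<close> unfolding Exts_def by blast
  qed
  then obtain M where "M \<in> Exts" and maximal: "\<forall>R\<in>Exts. M \<subseteq> R \<longrightarrow> R = M" by blast
  then have "partial_hom L M" "R0 \<subseteq> M" unfolding Exts_def by simp_all
  moreover have "R = M" if "partial_hom L R" "M \<subseteq> R" for R
    using maximal that \<open>R0 \<subseteq> M\<close> unfolding Exts_def by blast
  ultimately show thesis using that by blast
qed

lemma maximal_partial_hom_sqrt_closed:
  fixes M :: "('a::alg_closed_field \<times> 'a) set"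
  assumes L: "is_subfield L" and M: "partial_hom L M"
    and maximal: "\<And>R. partial_hom L R \<Longrightarrow> M \<subseteq> R \<Longrightarrow> R = M"
    and z: "z \<in> L" "z ^ 2 \<in> Domain M"
  shows "z \<in> Domain M"
proof (rule ccontr)
  assume "z \<notin> Domain M"
  obtain y where "y ^ 2 = graph_app M (z ^ 2)" using alg_closed_sqrt_exists by blast
  from partial_hom_adjoin_graph[OF M L z(1) \<open>z \<notin> Domain M\<close> z(2) this]
  have "adjoin_graph (Domain M) (graph_app M) z y = M" by (rule maximal)
  then have "adjoin (Domain M) z = Domain M" by (metis Domain_adjoin_graph)
  moreover have "is_subfield (Domain M)"
    using M field_hom_on.subfield unfolding partial_hom_def by blast
  ultimately show False using mem_adjoin_self \<open>z \<notin> Domain M\<close> by blast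
qed

theorem field_hom_on_extend:
  fixes \<phi> :: "'a::alg_closed_field \<Rightarrow> 'a"
  assumes \<phi>: "field_hom_on E \<phi>"
    and L: "is_subfield L" "E \<subseteq> L" "generated_by_square_roots E L"
  obtains \<psi> where "field_hom_on L \<psi>" "\<And>x. x \<in> E \<Longrightarrow> \<psi> x = \<phi> x"
proof -
  let ?R0 = "{(x, \<phi> x) | x. x \<in> E}"
  obtain M where M: "partial_hom L M" "?R0 \<subseteq> M"
    and maximal: "\<And>R. partial_hom L R \<Longrightarrow> M \<subseteq> R \<Longrightarrow> R = M"
    using maximal_partial_hom_exists[OF partial_hom_graph[OF \<phi> L(2)]] by blast
  have hom_M: "single_valued M" "Domain M \<subseteq> L" "field_hom_on (Domain M) (graph_app M)"
    using M(1) unfolding partial_hom_def by blast+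
  have "E \<subseteq> Domain M" using M(2) by blast
  then have "L \<subseteq> Domain M"
    using generated_by_square_rootsD[OF L(3) field_hom_on.subfield[OF hom_M(3)] _ hom_M(2)]
      maximal_partial_hom_sqrt_closed[OF L(1) M(1) maximal] by blast
  then have "field_hom_on L (graph_app M)" using hom_M(2,3) by (simp add: subset_antisym)
  moreover have "graph_app M x = \<phi> x" if "x \<in> E" for x
    using that M(2) by (intro graph_app_eq[OF hom_M(1)]) blast
  ultimately show thesis using that by blast
qed

lemma subfield_range_to_ac: "is_subfield (range (to_ac :: 'k::field \<Rightarrow> 'k alg_closure))"
proof -
  have "to_ac a + to_ac b \<in> range to_ac" "to_ac a * to_ac b \<in> range to_ac"
    "- to_ac a \<in> range to_ac" "inverse (to_ac a) \<in> range to_ac" for a b :: 'k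
    by (metis rangeI to_ac_add, metis rangeI to_ac_mult, metis rangeI to_ac_minus,
        metis rangeI to_ac_inverse)
  moreover have "(0 :: 'k alg_closure) \<in> range to_ac" "(1 :: 'k alg_closure) \<in> range to_ac"
    by (metis rangeI to_ac_0, metis rangeI to_ac_1)
  ultimately show ?thesis unfolding is_subfield_def by blast
qed

definition iter_preimage :: "'k::field \<Rightarrow> 'k \<Rightarrow> nat \<Rightarrow> 'k alg_closure set" where
  "iter_preimage c \<alpha> n = {z. (fbar c ^^ n) z = to_ac \<alpha>}"

lemma iter_preimage_0: "iter_preimage c \<alpha> 0 = {to_ac \<alpha>}"
  unfolding iter_preimage_def by simp

lemma iter_preimage_Suc: "z \<in> iter_preimage c \<alpha> (Suc n) \<longleftrightarrow> fbar c z \<in> iter_preimage c \<alpha> n"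
  unfolding iter_preimage_def funpow_Suc_right by simp

lemma iter_preimage_sqrt:
  assumes "y \<in> iter_preimage c \<alpha> n"
  obtains z where "z ^ 2 = y - to_ac c"
    "z \<in> iter_preimage c \<alpha> (Suc n)" "- z \<in> iter_preimage c \<alpha> (Suc n)"
proof -
  obtain z where z: "z ^ 2 = y - to_ac c" using alg_closed_sqrt_exists by blast
  then have "fbar c z = y" "fbar c (- z) = y" by (simp_all add: fbar_def)
  then show thesis using that z assms iter_preimage_Suc by metis
qed

lemma finite_iter_preimage: "finite (iter_preimage c \<alpha> n)"
proof (induction n)
  case (Suc n)
  have "iter_preimage c \<alpha> (Suc n) \<subseteq> (\<Union>y\<in>iter_preimage c \<alpha> n. {z. z ^ 2 = y - to_ac c})"
  proof
    fix z assume "z \<in> iter_preimage c \<alpha> (Suc n)"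
    then have "fbar c z \<in> iter_preimage c \<alpha> n" "z ^ 2 = fbar c z - to_ac c"
      using iter_preimage_Suc by (auto simp: fbar_def)
    then show "z \<in> (\<Union>y\<in>iter_preimage c \<alpha> n. {z. z ^ 2 = y - to_ac c})" by blast
  qed
  moreover have "finite {z. z ^ 2 = y - to_ac c}" for y
  proof -
    obtain r where "r ^ 2 = y - to_ac c" using alg_closed_sqrt_exists by blast
    then have "{z. z ^ 2 = y - to_ac c} = {z. z ^ 2 = r ^ 2}" by simp
    also have "\<dots> \<subseteq> {r, - r}" by (auto simp: power2_eq_iff)
    finally have "{z. z ^ 2 = y - to_ac c} \<subseteq> {r, - r}" .
    then show ?thesis by (rule finite_subset) simp
  qed
  ultimately show ?case using Suc by (meson finite_UN_I finite_subset)
qed (simp add: iter_preimage_0)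

lemma Kn_eq: "Kn c \<alpha> n = gen_subfield (range to_ac \<union> iter_preimage c \<alpha> n)"
  unfolding Kn_def iter_preimage_def ..

lemma subfield_Kn: "is_subfield (Kn c \<alpha> n)"
  unfolding Kn_def by (rule subfield_gen_subfield)

lemma to_ac_mem_Kn: "to_ac a \<in> Kn c \<alpha> n"
  unfolding Kn_eq by (rule subsetD[OF gen_subfield_superset]) simp

lemma iter_preimage_subset_Kn: "iter_preimage c \<alpha> n \<subseteq> Kn c \<alpha> n"
  unfolding Kn_eq by (rule subset_trans[OF _ gen_subfield_superset]) simp

lemma Kn_Suc_superset: "Kn c \<alpha> n \<subseteq> Kn c \<alpha> (Suc n)"
proof -
  have "y \<in> Kn c \<alpha> (Suc n)" if y: "y \<in> iter_preimage c \<alpha> n" for y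
  proof -
    obtain z where z: "z ^ 2 = y - to_ac c" "z \<in> iter_preimage c \<alpha> (Suc n)"
      using iter_preimage_sqrt[OF y] by blast
    then have "z ^ 2 + to_ac c \<in> Kn c \<alpha> (Suc n)"
      using iter_preimage_subset_Kn subfield_power[OF subfield_Kn] is_subfieldD(3)[OF subfield_Kn]
        to_ac_mem_Kn by blast
    then show ?thesis using z(1) by simp
  qed
  then have "range to_ac \<union> iter_preimage c \<alpha> n \<subseteq> Kn c \<alpha> (Suc n)" using to_ac_mem_Kn by blast
  then show ?thesis unfolding Kn_eq[of c \<alpha> n] by (rule gen_subfield_least[OF subfield_Kn])
qed

lemma mono_Kn: "mono (Kn c \<alpha>)"
  unfolding mono_iff_le_Suc using Kn_Suc_superset by blast

lemma subfield_Kinf: "is_subfield (Kinf c \<alpha>)"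
  unfolding Kinf_def
proof (rule subfield_Union_chain)
  show "chain\<^sub>\<subseteq> (Kn c \<alpha> ` {1..})"
    unfolding chain_subset_def
  proof (intro ballI)
    fix A B assume "A \<in> Kn c \<alpha> ` {1..}" "B \<in> Kn c \<alpha> ` {1..}"
    then obtain i j where "A = Kn c \<alpha> i" "B = Kn c \<alpha> j" by blast
    moreover have "i \<le> j \<or> j \<le> i" by linarith
    ultimately show "A \<subseteq> B \<or> B \<subseteq> A" using monoD[OF mono_Kn] by blast
  qed
  show "Kn c \<alpha> ` {1..} \<noteq> {}" by simp
  show "is_subfield F" if "F \<in> Kn c \<alpha> ` {1..}" for F using that subfield_Kn by blast
qed

lemma Kn_Suc_subset_Kinf: "Kn c \<alpha> (Suc n) \<subseteq> Kinf c \<alpha>"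
  unfolding Kinf_def by (rule UN_upper) simp

lemma to_ac_mem_Kinf: "to_ac a \<in> Kinf c \<alpha>"
  using to_ac_mem_Kn Kn_Suc_subset_Kinf by blast

lemma iter_preimage_subset_Kinf: "iter_preimage c \<alpha> (Suc n) \<subseteq> Kinf c \<alpha>"
  using iter_preimage_subset_Kn Kn_Suc_subset_Kinf by blast

lemma Kinf_generated_by_square_roots: "generated_by_square_roots (range to_ac) (Kinf c \<alpha>)"
proof (rule generated_by_square_rootsI)
  fix E assume E: "is_subfield E" "range to_ac \<subseteq> E"
    and sqrt_closed: "\<And>z. z \<in> Kinf c \<alpha> \<Longrightarrow> z ^ 2 \<in> E \<Longrightarrow> z \<in> E"
  have preimages: "iter_preimage c \<alpha> n \<subseteq> E" for n
  proof (induction n)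
    case 0
    show ?case using E(2) by (auto simp: iter_preimage_0)
  next
    case (Suc n)
    show ?case
    proof
      fix z assume z: "z \<in> iter_preimage c \<alpha> (Suc n)"
      then have "fbar c z \<in> E" using Suc iter_preimage_Suc by blast
      moreover have "z ^ 2 = fbar c z - to_ac c" by (simp add: fbar_def)
      moreover have "to_ac c \<in> E" using E(2) by blast
      ultimately have "z ^ 2 \<in> E" using subfield_diff[OF E(1)] by simp
      then show "z \<in> E" using sqrt_closed iter_preimage_subset_Kinf z by blast
    qed
  qed
  have "Kn c \<alpha> n \<subseteq> E" for n
    unfolding Kn_eq using preimages E by (intro gen_subfield_least) auto
  then show "Kinf c \<alpha> \<subseteq> E" unfolding Kinf_def by blast
qed

section \<open>Automorphisms of K_\<infinity>(f, \<alpha>)\<close>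

lemma Ginf_field_hom_on: "\<sigma> \<in> Ginf c \<alpha> \<Longrightarrow> field_hom_on (Kinf c \<alpha>) \<sigma>"
proof
  assume \<sigma>: "\<sigma> \<in> Ginf c \<alpha>"
  show "is_subfield (Kinf c \<alpha>)" by (rule subfield_Kinf)
  have "\<sigma> (to_ac 1) = to_ac 1" using \<sigma> unfolding Ginf_def by blast
  then show "\<sigma> 1 = 1" by simp
  fix x y assume "x \<in> Kinf c \<alpha>" "y \<in> Kinf c \<alpha>"
  then show "\<sigma> (x + y) = \<sigma> x + \<sigma> y" "\<sigma> (x * y) = \<sigma> x * \<sigma> y"
    using \<sigma> unfolding Ginf_def by blast+
qed

lemma Ginf_fixes_to_ac: "\<sigma> \<in> Ginf c \<alpha> \<Longrightarrow> \<sigma> (to_ac a) = to_ac a"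
  unfolding Ginf_def by blast

lemma Ginf_maps_Kinf: "\<sigma> \<in> Ginf c \<alpha> \<Longrightarrow> x \<in> Kinf c \<alpha> \<Longrightarrow> \<sigma> x \<in> Kinf c \<alpha>"
  unfolding Ginf_def bij_betw_def by blast

lemma fbar_mem_Kinf: "z \<in> Kinf c \<alpha> \<Longrightarrow> fbar c z \<in> Kinf c \<alpha>"
  unfolding fbar_def
  using is_subfieldD(3)[OF subfield_Kinf subfield_power[OF subfield_Kinf] to_ac_mem_Kinf] .

lemma funpow_fbar_mem_Kinf: "z \<in> Kinf c \<alpha> \<Longrightarrow> (fbar c ^^ k) z \<in> Kinf c \<alpha>"
  by (induction k) (simp_all add: fbar_mem_Kinf)

context
  fixes c \<alpha> :: "'k::field" and \<sigma> :: "'k alg_closure \<Rightarrow> 'k alg_closure"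
  assumes \<sigma>: "field_hom_on (Kinf c \<alpha>) \<sigma>" and fixes_to_ac: "\<And>a. \<sigma> (to_ac a) = to_ac a"
begin

interpretation field_hom_on "Kinf c \<alpha>" \<sigma> by (rule \<sigma>)

lemma map_fbar: "z \<in> Kinf c \<alpha> \<Longrightarrow> \<sigma> (fbar c z) = fbar c (\<sigma> z)"
  unfolding fbar_def
  using map_add[OF subfield_power[OF subfield_Kinf] to_ac_mem_Kinf] map_power2 fixes_to_ac by simp

lemma map_funpow_fbar: "z \<in> Kinf c \<alpha> \<Longrightarrow> \<sigma> ((fbar c ^^ k) z) = (fbar c ^^ k) (\<sigma> z)"
  by (induction k) (simp_all add: map_fbar funpow_fbar_mem_Kinf)

lemma image_iter_preimage: "\<sigma> ` iter_preimage c \<alpha> (Suc n) = iter_preimage c \<alpha> (Suc n)"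
proof (rule endo_inj_surj[OF finite_iter_preimage])
  show "\<sigma> ` iter_preimage c \<alpha> (Suc n) \<subseteq> iter_preimage c \<alpha> (Suc n)"
  proof (rule image_subsetI)
    fix z assume z: "z \<in> iter_preimage c \<alpha> (Suc n)"
    then have "z \<in> Kinf c \<alpha>" using iter_preimage_subset_Kinf by blast
    then have "(fbar c ^^ Suc n) (\<sigma> z) = \<sigma> ((fbar c ^^ Suc n) z)"
      by (rule map_funpow_fbar[symmetric])
    also have "\<dots> = \<sigma> (to_ac \<alpha>)" using z unfolding iter_preimage_def by simp
    finally have "(fbar c ^^ Suc n) (\<sigma> z) = \<sigma> (to_ac \<alpha>)" .
    then show "\<sigma> z \<in> iter_preimage c \<alpha> (Suc n)"
      unfolding iter_preimage_def fixes_to_ac by simp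
  qed
  show "inj_on \<sigma> (iter_preimage c \<alpha> (Suc n))"
    using inj_on_subset[OF inj_on iter_preimage_subset_Kinf] .
qed

lemma image_Kn_Suc: "\<sigma> ` Kn c \<alpha> (Suc n) = Kn c \<alpha> (Suc n)"
proof -
  have "\<sigma> ` Kn c \<alpha> (Suc n) = gen_subfield (\<sigma> ` (range to_ac \<union> iter_preimage c \<alpha> (Suc n)))"
    unfolding Kn_eq by (rule image_gen_subfield[OF Kn_Suc_subset_Kinf[unfolded Kn_eq]])
  also have "\<sigma> ` (range to_ac \<union> iter_preimage c \<alpha> (Suc n)) = range to_ac \<union> iter_preimage c \<alpha> (Suc n)"
    unfolding image_Un image_iter_preimage by (simp add: image_image fixes_to_ac)
  finally show ?thesis unfolding Kn_eq .
qed

lemma Ginf_intro: "\<sigma> \<in> Ginf c \<alpha>"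
proof -
  have "\<sigma> ` Kn c \<alpha> n = Kn c \<alpha> n" if "n \<in> {1..}" for n
    using that image_Kn_Suc by (cases n) auto
  then have "\<sigma> ` Kinf c \<alpha> = Kinf c \<alpha>" unfolding Kinf_def image_UN by simp
  then have "bij_betw \<sigma> (Kinf c \<alpha>) (Kinf c \<alpha>)" using inj_on unfolding bij_betw_def by blast
  then show ?thesis unfolding Ginf_def using map_add map_mult fixes_to_ac by blast
qed

end

lemma Ginf_exists_negating:
  assumes E: "is_subfield E" "range to_ac \<subseteq> E" "E \<subseteq> Kinf c \<alpha>"
    and x: "x \<in> Kinf c \<alpha>" "x \<notin> E" "x ^ 2 \<in> E"
  obtains \<sigma> where "\<sigma> \<in> Ginf c \<alpha>" "\<sigma> x = - x" "\<And>a. a \<in> E \<Longrightarrow> \<sigma> a = a"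
proof -
  interpret field_hom_on E id by (rule field_hom_on_id[OF E(1)])
  let ?\<psi> = "graph_app (adjoin_graph E id x (- x))"
  have \<psi>: "?\<psi> (a + b * x) = a + b * (- x)" if "a \<in> E" "b \<in> E" for a b
    using graph_app_adjoin_graph[OF x(2) that] by simp
  have "field_hom_on (adjoin E x) ?\<psi>"
    using field_hom_on_adjoin_graph[OF x(2,3)] by simp
  moreover have "adjoin E x \<subseteq> Kinf c \<alpha>" by (rule adjoin_subset[OF subfield_Kinf E(3) x(1)])
  moreover have "generated_by_square_roots (adjoin E x) (Kinf c \<alpha>)"
    using generated_by_square_roots_mono[OF Kinf_generated_by_square_roots] E(2)
      subset_adjoin[OF E(1)] by blast
  ultimately obtain \<sigma> where \<sigma>: "field_hom_on (Kinf c \<alpha>) \<sigma>"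
    and \<sigma>_\<psi>: "\<And>u. u \<in> adjoin E x \<Longrightarrow> \<sigma> u = ?\<psi> u"
    using field_hom_on_extend[OF _ subfield_Kinf] by blast
  have \<sigma>_E: "\<sigma> a = a" if "a \<in> E" for a
    using \<sigma>_\<psi>[OF adjoinI[OF that is_subfieldD(1)[OF E(1)]]] \<psi>[OF that is_subfieldD(1)[OF E(1)]]
    by simp
  have "\<sigma> x = - x"
    using \<sigma>_\<psi>[OF adjoinI[OF is_subfieldD(1,2)[OF E(1)]]] \<psi>[OF is_subfieldD(1,2)[OF E(1)]]
    by simp
  moreover have "\<sigma> \<in> Ginf c \<alpha>" using Ginf_intro[OF \<sigma>] \<sigma>_E E(2) by blast
  ultimately show thesis using that \<sigma>_E by blast
qed

section \<open>Square classes\<close>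

lemma sq_class_mult_square: "r \<noteq> 0 \<Longrightarrow> sq_class (x * r ^ 2) = sq_class x"
proof -
  assume r: "r \<noteq> 0"
  have "x * r ^ 2 * y ^ 2 = x * (r * y) ^ 2" "x * y ^ 2 = x * r ^ 2 * (y / r) ^ 2" for y
    using r by (simp_all add: power_mult_distrib power_divide)
  moreover have "r * y \<noteq> 0 \<longleftrightarrow> y \<noteq> 0" "y / r \<noteq> 0 \<longleftrightarrow> y \<noteq> 0" for y using r by simp_all
  ultimately show ?thesis unfolding sq_class_def by metis
qed

lemma sq_class_eq_iff: "sq_class x = sq_class y \<longleftrightarrow> (\<exists>r. r \<noteq> 0 \<and> x = y * r ^ 2)"
proof
  assume "sq_class x = sq_class y"
  moreover have "x \<in> sq_class x" unfolding sq_class_def by (intro CollectI exI[of _ 1]) simp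
  ultimately show "\<exists>r. r \<noteq> 0 \<and> x = y * r ^ 2" unfolding sq_class_def by blast
qed (use sq_class_mult_square in blast)

lemma sq_class_mult_cong:
  assumes "sq_class x = sq_class x'" "sq_class y = sq_class y'"
  shows "sq_class (x * y) = sq_class (x' * y')"
proof -
  obtain r q where "r \<noteq> 0" "q \<noteq> 0" "x = x' * r ^ 2" "y = y' * q ^ 2"
    using assms unfolding sq_class_eq_iff by blast
  then have "x * y = x' * y' * (r * q) ^ 2" "r * q \<noteq> 0"
    by (simp_all add: power_mult_distrib)
  then show ?thesis unfolding sq_class_eq_iff by blast
qed

lemma sq_class_prod_mem:
  assumes "finite S" "d \<noteq> 0" "\<And>n. n \<in> S \<Longrightarrow> sq_class (x n) \<in> {sq_class 1, sq_class d}"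
  shows "sq_class (\<Prod>n\<in>S. x n) \<in> {sq_class 1, sq_class d}"
  using assms(1,3)
proof (induction S rule: finite_induct)
  case (insert n S)
  have "sq_class (x n) \<in> {sq_class 1, sq_class d}" using insert.prems by simp
  then obtain u where u: "u \<in> {1, d}" "sq_class (x n) = sq_class u" by blast
  have "sq_class (\<Prod>n\<in>S. x n) \<in> {sq_class 1, sq_class d}"
    using insert.IH insert.prems by simp
  then obtain v where v: "v \<in> {1, d}" "sq_class (\<Prod>n\<in>S. x n) = sq_class v" by blast
  have "sq_class (\<Prod>n\<in>insert n S. x n) = sq_class (u * v)"
    unfolding prod.insert[OF insert.hyps] by (rule sq_class_mult_cong[OF u(2) v(2)])
  moreover have "sq_class (d * d) = sq_class 1"
    using sq_class_mult_square[OF assms(2), of 1] by (simp add: power2_eq_square)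
  moreover have "u * v \<in> {1, d, d * d}" using u(1) v(1) by auto
  ultimately show ?case by auto
qed simp

lemma two_neq_zero_alg_closure: "(2::'k::field) \<noteq> 0 \<Longrightarrow> (2::'k alg_closure) \<noteq> 0"
  by (metis to_ac_eq_0_iff to_ac_numeral)

lemma sq_class_of_square_in_adjoin:
  fixes d e :: "'k::field"
  assumes two: "(2::'k) \<noteq> 0" and s: "s \<notin> range to_ac" "s ^ 2 = to_ac d"
    and v: "v \<in> adjoin (range to_ac) s" "v ^ 2 = to_ac e" and "e \<noteq> 0"
  shows "sq_class e \<in> {sq_class 1, sq_class d}"
proof -
  obtain a b where ab: "v = to_ac a + to_ac b * s"
    using v(1) unfolding adjoin_def by blast
  have "to_ac a = 0 \<or> to_ac b = 0"
    using square_in_adjoin_iff[OF subfield_range_to_ac two_neq_zero_alg_closure[OF two] s(1) _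
        rangeI rangeI] s(2) v(2) ab
    by auto
  then show ?thesis
  proof
    assume "to_ac a = 0"
    then have "to_ac e = to_ac (d * b ^ 2)"
      using ab v(2) s(2) by (simp add: power_mult_distrib mult.commute)
    then have "e = d * b ^ 2" by (simp only: to_ac_eq_iff)
    then show ?thesis using \<open>e \<noteq> 0\<close> sq_class_mult_square[of b d] by auto
  next
    assume "to_ac b = 0"
    then have "to_ac e = to_ac (1 * a ^ 2)" using ab v(2) by simp
    then have "e = 1 * a ^ 2" by (simp only: to_ac_eq_iff)
    then show ?thesis using \<open>e \<noteq> 0\<close> sq_class_mult_square[of a 1] by auto
  qed
qed

lemma square_times_conjugate:
  fixes a b d :: "'k::field"
  assumes t: "t \<in> Ginf c \<alpha>" "t s = - s" and s: "s \<in> Kinf c \<alpha>" "s ^ 2 = to_ac d"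
    and w: "w \<in> Kinf c \<alpha>" "w ^ 2 = to_ac a + to_ac b * s"
  shows "(w * t w) ^ 2 = to_ac (a ^ 2 - d * b ^ 2)"
proof -
  interpret field_hom_on "Kinf c \<alpha>" t by (rule Ginf_field_hom_on[OF t(1)])
  have "t w ^ 2 = t (to_ac a + to_ac b * s)" using map_power2[OF w(1)] w(2) by simp
  also have "\<dots> = t (to_ac a) + t (to_ac b) * t s"
    using map_add[OF to_ac_mem_Kinf is_subfieldD(4)[OF subfield_Kinf to_ac_mem_Kinf s(1)]]
      map_mult[OF to_ac_mem_Kinf s(1)] by simp
  also have "\<dots> = to_ac a - to_ac b * s" using t(2) Ginf_fixes_to_ac[OF t(1)] by simp
  finally have "(w * t w) ^ 2 = (to_ac a + to_ac b * s) * (to_ac a - to_ac b * s)"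
    unfolding power_mult_distrib w(2) by simp
  also have "\<dots> = to_ac a ^ 2 - to_ac b ^ 2 * s ^ 2"
    by (simp add: algebra_simps power2_eq_square)
  finally show ?thesis using s(2) by simp
qed

theorem sq_class_norm_of_square:
  fixes a b d :: "'k::field"
  assumes two: "(2::'k) \<noteq> 0" and abelian: "Ginf_abelian c \<alpha>"
    and s: "s \<in> Kinf c \<alpha>" "s \<notin> range to_ac" "s ^ 2 = to_ac d"
    and w: "w \<in> Kinf c \<alpha>" "w ^ 2 = to_ac a + to_ac b * s"
    and nonzero: "a ^ 2 - d * b ^ 2 \<noteq> 0"
  shows "sq_class (a ^ 2 - d * b ^ 2) \<in> {sq_class 1, sq_class d}"
proof (rule ccontr)
  assume not_trivial: "sq_class (a ^ 2 - d * b ^ 2) \<notin> {sq_class 1, sq_class d}"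
  let ?K = "range (to_ac :: 'k \<Rightarrow> 'k alg_closure)"
  let ?Ks = "adjoin ?K s"
  have K: "?K \<subseteq> Kinf c \<alpha>" "s ^ 2 \<in> ?K" using to_ac_mem_Kinf s(3) by auto
  obtain t where t: "t \<in> Ginf c \<alpha>" "t s = - s"
    using Ginf_exists_negating[OF subfield_range_to_ac subset_refl K(1) s(1,2) K(2)] by blast
  define v where "v = w * t w"
  have tw: "t w \<in> Kinf c \<alpha>" by (rule Ginf_maps_Kinf[OF t(1) w(1)])
  have v_sq: "v ^ 2 = to_ac (a ^ 2 - d * b ^ 2)"
    unfolding v_def by (rule square_times_conjugate[OF t s(1,3) w])
  have "v \<noteq> 0"
  proof
    assume "v = 0"
    then have "to_ac (a ^ 2 - d * b ^ 2) = 0" using v_sq by (metis zero_power2)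
    then show False using nonzero by (simp only: to_ac_eq_0_iff)
  qed
  have Ks: "is_subfield ?Ks" "?K \<subseteq> ?Ks" "?Ks \<subseteq> Kinf c \<alpha>"
    using adjoin_subfield[OF subfield_range_to_ac s(2) K(2)] subset_adjoin[OF subfield_range_to_ac]
      adjoin_subset[OF subfield_Kinf K(1) s(1)] by blast+
  have "v \<notin> ?Ks"
    using sq_class_of_square_in_adjoin[OF two s(2,3) _ v_sq nonzero] not_trivial by blast
  moreover have "v \<in> Kinf c \<alpha>" unfolding v_def using is_subfieldD(4)[OF subfield_Kinf w(1) tw] .
  moreover have "v ^ 2 \<in> ?Ks" using v_sq Ks(2) by blast
  ultimately obtain g where g: "g \<in> Ginf c \<alpha>" "g v = - v" "\<And>u. u \<in> ?Ks \<Longrightarrow> g u = u"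
    using Ginf_exists_negating[OF Ks] by blast
  interpret G: field_hom_on "Kinf c \<alpha>" g by (rule Ginf_field_hom_on[OF g(1)])
  interpret T: field_hom_on "Kinf c \<alpha>" t by (rule Ginf_field_hom_on[OF t(1)])
  have "w ^ 2 \<in> ?Ks" unfolding w(2) by (rule adjoinI) simp_all
  then have "g w ^ 2 = w ^ 2" using G.map_power2[OF w(1)] g(3) by simp
  then have "g w = w \<or> g w = - w" by (simp add: power2_eq_iff)
  moreover have "g (t w) = t (g w)"
    using abelian g(1) t(1) w(1) unfolding Ginf_abelian_def by blast
  ultimately have "g v = v"
    unfolding v_def using G.map_mult[OF w(1) tw] T.map_uminus[OF w(1)] by auto
  then have "2 * v = 0" using g(2) by simp
  then show False using two_neq_zero_alg_closure[OF two] \<open>v \<noteq> 0\<close> by simp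
qed

section \<open>The classes of the elements c_{n,\<alpha>}\<close>

lemma square_crit_orbit_minus_preimage:
  fixes c \<alpha> :: "'k::field"
  assumes "2 \<le> m" and "y \<in> iter_preimage c \<alpha> n"
  shows "\<exists>w\<in>Kinf c \<alpha>. w ^ 2 = (fbar c ^^ m) 0 - y"
  using assms
proof (induction m arbitrary: y n rule: nat_induct_at_least)
  case base
  obtain z where z: "z ^ 2 = y - to_ac c"
    "z \<in> iter_preimage c \<alpha> (Suc n)" "- z \<in> iter_preimage c \<alpha> (Suc n)"
    using iter_preimage_sqrt[OF base] by blast
  obtain w1 where w1: "w1 ^ 2 = z - to_ac c" "w1 \<in> iter_preimage c \<alpha> (Suc (Suc n))"
    using iter_preimage_sqrt[OF z(2)] by blast
  obtain w2 where w2: "w2 ^ 2 = - z - to_ac c" "w2 \<in> iter_preimage c \<alpha> (Suc (Suc n))"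
    using iter_preimage_sqrt[OF z(3)] by blast
  have "(w1 * w2) ^ 2 = (z - to_ac c) * (- z - to_ac c)"
    using w1(1) w2(1) by (simp add: power_mult_distrib)
  also have "\<dots> = (fbar c ^^ 2) 0 - y"
    using z(1) by (simp add: fbar_def numeral_2_eq_2 algebra_simps power2_eq_square)
  finally show ?case
    using w1(2) w2(2) iter_preimage_subset_Kinf is_subfieldD(4)[OF subfield_Kinf] by blast
next
  case (Suc m)
  let ?u = "(fbar c ^^ m) 0"
  obtain z where z: "z ^ 2 = y - to_ac c"
    "z \<in> iter_preimage c \<alpha> (Suc n)" "- z \<in> iter_preimage c \<alpha> (Suc n)"
    using iter_preimage_sqrt[OF Suc.prems] by blast
  obtain w1 w2 where w: "w1 \<in> Kinf c \<alpha>" "w1 ^ 2 = ?u - z" "w2 \<in> Kinf c \<alpha>" "w2 ^ 2 = ?u - (- z)"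
    using Suc.IH[OF z(2)] Suc.IH[OF z(3)] by blast
  have "(w1 * w2) ^ 2 = (?u - z) * (?u + z)"
    using w(2,4) by (simp add: power_mult_distrib)
  also have "\<dots> = (fbar c ^^ Suc m) 0 - y"
    using z(1) by (simp add: fbar_def algebra_simps power2_eq_square)
  finally show ?case using w(1,3) is_subfieldD(4)[OF subfield_Kinf] by blast
qed

lemma funpow_fbar_to_ac: "(fbar c ^^ n) (to_ac x) = to_ac (((\<lambda>x. x ^ 2 + c) ^^ n) x)"
  by (induction n) (simp_all add: fbar_def)

lemma cseq_alpha_eq:
  assumes "2 \<le> n"
  shows "cseq_alpha c \<alpha> n = ((\<lambda>x. x ^ 2 + c) ^^ n) 0 - \<alpha>"
proof -
  obtain k where n: "n = Suc (Suc k)" using assms by (metis add_2_eq_Suc le_Suc_ex)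
  have "cseq c n = ((\<lambda>x. x ^ 2 + c) ^^ k) ((- c) ^ 2 + c)"
    unfolding cseq_def n by (simp add: funpow_Suc_right del: funpow.simps)
  also have "\<dots> = ((\<lambda>x. x ^ 2 + c) ^^ n) 0"
    unfolding n by (simp add: funpow_Suc_right del: funpow.simps)
  finally show ?thesis unfolding cseq_alpha_def using n by simp
qed

lemma cseq_alpha_Suc_0: "cseq_alpha c \<alpha> (Suc 0) = \<alpha> - c"
  by (simp add: cseq_alpha_def cseq_def)

lemma cseq_alpha_nonzero:
  assumes "0 \<notin> backward_orbit c \<alpha>" "2 \<le> n"
  shows "cseq_alpha c \<alpha> n \<noteq> 0"
proof
  assume "cseq_alpha c \<alpha> n = 0"
  then have "(fbar c ^^ n) (to_ac 0) = to_ac \<alpha>"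
    unfolding funpow_fbar_to_ac cseq_alpha_eq[OF assms(2)] by simp
  then have "0 \<in> backward_orbit c \<alpha>"
    unfolding backward_orbit_def using assms(2) by (intro CollectI exI[of _ n]) simp
  then show False using assms(1) by blast
qed

lemma sqrt_mem_iter_preimage_1: "s ^ 2 = to_ac (\<alpha> - c) \<Longrightarrow> s \<in> iter_preimage c \<alpha> (Suc 0)"
  unfolding iter_preimage_def by (simp add: fbar_def)

lemma cseq_alpha_norm_of_square:
  fixes c \<alpha> :: "'k::field"
  assumes n: "2 \<le> n" and s: "s ^ 2 = to_ac (\<alpha> - c)"
  obtains a b w where "w \<in> Kinf c \<alpha>" "w ^ 2 = to_ac a + to_ac b * s"
    "cseq_alpha c \<alpha> n = a ^ 2 - (\<alpha> - c) * b ^ 2"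
proof -
  let ?u = "((\<lambda>x. x ^ 2 + c) ^^ (n - 1)) 0"
  have norm: "cseq_alpha c \<alpha> n = ?u ^ 2 - (\<alpha> - c)"
    unfolding cseq_alpha_eq[OF n] using n by (cases n) (simp_all add: algebra_simps)
  note s_preimage = sqrt_mem_iter_preimage_1[OF s]
  show thesis
  proof (cases "n = 2")
    case True
    \<comment> \<open>Here u - s = c - s need not be a square in K_\<infinity>, but s - c is and has the same norm.\<close>
    obtain w where "w ^ 2 = s - to_ac c" "w \<in> iter_preimage c \<alpha> (Suc (Suc 0))"
      using iter_preimage_sqrt[OF s_preimage] by blast
    then show thesis
      using that[of w "- c" 1] norm True iter_preimage_subset_Kinf by (auto simp: algebra_simps)
  next
    case False
    then have "2 \<le> n - 1" using n by simp
    then obtain w where "w \<in> Kinf c \<alpha>" "w ^ 2 = (fbar c ^^ (n - 1)) (to_ac 0) - s"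
      using square_crit_orbit_minus_preimage[OF _ s_preimage] by auto
    then show thesis using that[of w ?u "- 1"] norm unfolding funpow_fbar_to_ac by simp
  qed
qed

lemma sq_class_cseq_alpha:
  fixes c \<alpha> :: "'k::field"
  assumes two: "(2::'k) \<noteq> 0" and orbit: "0 \<notin> backward_orbit c \<alpha>"
    and abelian: "Ginf_abelian c \<alpha>" and nonsquare: "\<nexists>r. r ^ 2 = \<alpha> - c" and "1 \<le> n"
  shows "sq_class (cseq_alpha c \<alpha> n) \<in> {sq_class 1, sq_class (\<alpha> - c)}"
proof (cases "n = 1")
  case True
  then show ?thesis by (simp add: cseq_alpha_Suc_0)
next
  case False
  then have n: "2 \<le> n" using \<open>1 \<le> n\<close> by simp
  obtain s where s_sq: "s ^ 2 = to_ac (\<alpha> - c)" using alg_closed_sqrt_exists by blast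
  have s_notin: "s \<notin> range to_ac"
  proof
    assume "s \<in> range to_ac"
    then obtain r where "to_ac (r ^ 2) = to_ac (\<alpha> - c)" using s_sq by auto
    then show False using nonsquare by (simp only: to_ac_eq_iff) blast
  qed
  have s: "s \<in> Kinf c \<alpha>"
    using sqrt_mem_iter_preimage_1[OF s_sq] iter_preimage_subset_Kinf by blast
  obtain a b w where w: "w \<in> Kinf c \<alpha>" "w ^ 2 = to_ac a + to_ac b * s"
    and norm: "cseq_alpha c \<alpha> n = a ^ 2 - (\<alpha> - c) * b ^ 2"
    using cseq_alpha_norm_of_square[OF n s_sq] by blast
  show ?thesis
    using sq_class_norm_of_square[OF two abelian s s_notin s_sq w] cseq_alpha_nonzero[OF orbit n]
    unfolding norm by blast
qed

lemma irreducible_quadratic_not_square: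
  fixes c \<alpha> :: "'k::field"
  assumes "irreducible [:c - \<alpha>, 0, 1:]"
  shows "\<nexists>r. r ^ 2 = \<alpha> - c"
proof
  assume "\<exists>r. r ^ 2 = \<alpha> - c"
  then obtain r where "r ^ 2 = \<alpha> - c" by blast
  then have "[:c - \<alpha>, 0, 1:] = [:- r, 1:] * [:r, 1:]"
    by (simp add: power2_eq_square algebra_simps)
  then have "[:- r, 1:] dvd 1 \<or> [:r, 1:] dvd 1" using irreducibleD[OF assms] by blast
  then show False unfolding is_unit_poly_iff by auto
qed

lemma sq_class_one_ne_nonsquare:
  assumes "\<nexists>r. r ^ 2 = d"
  shows "sq_class 1 \<noteq> sq_class d"
proof
  assume "sq_class 1 = sq_class d"
  then obtain r where "r \<noteq> 0" "1 = d * r ^ 2" unfolding sq_class_eq_iff by blast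
  then have "d = (inverse r) ^ 2" by (simp add: field_simps power2_eq_square)
  then show False using assms by blast
qed

lemma c_span_eq:
  assumes "\<alpha> - c \<noteq> 0"
    and "\<And>n. 1 \<le> n \<Longrightarrow> sq_class (cseq_alpha c \<alpha> n) \<in> {sq_class 1, sq_class (\<alpha> - c)}"
  shows "c_span c \<alpha> = {sq_class 1, sq_class (\<alpha> - c)}"
proof
  show "c_span c \<alpha> \<subseteq> {sq_class 1, sq_class (\<alpha> - c)}"
    unfolding c_span_def using sq_class_prod_mem[OF _ assms(1)] assms(2) by blast
  have "sq_class 1 \<in> c_span c \<alpha>"
    unfolding c_span_def by (intro CollectI exI[of _ "{}"]) simp
  moreover have "sq_class (\<alpha> - c) \<in> c_span c \<alpha>"
    unfolding c_span_def by (intro CollectI exI[of _ "{1}"]) (simp add: cseq_alpha_Suc_0)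
  ultimately show "{sq_class 1, sq_class (\<alpha> - c)} \<subseteq> c_span c \<alpha>" by blast
qed

theorem theorem3p3:
  fixes c \<alpha> :: "'k::field"
  assumes "(2::'k) \<noteq> 0"
    and "0 \<notin> backward_orbit c \<alpha>"
    and "Ginf_abelian c \<alpha>"
    and "irreducible [:c - \<alpha>, 0, 1:]"
  shows "card (c_span c \<alpha>) = 2"
proof -
  have nonsquare: "\<nexists>r. r ^ 2 = \<alpha> - c"
    by (rule irreducible_quadratic_not_square[OF assms(4)])
  then have "\<alpha> - c \<noteq> 0" by (metis zero_power2)
  then have "c_span c \<alpha> = {sq_class 1, sq_class (\<alpha> - c)}"
    using c_span_eq sq_class_cseq_alpha[OF assms(1-3) nonsquare] by blast
  then show ?thesis using sq_class_one_ne_nonsquare[OF nonsquare] by simp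
qed

end
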